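(* Let $0<\alpha\le2$, $j\ne0$, $V\in C^2(\mathbb{T})$, and $G(x)=p_0+\sum_{k=1}^{n}p_k\cos(2\pi kx)+\sum_{k=1}^nq_k\sin(2\pi kx)$ with $p_k^2+q_k^2>0$ for $1\le k\le n$. If $(m,\overline{H})\in C(\mathbb{T})\times\mathbb{R}$ solves problem (P), then there is $(a_0,\dots,a_n,b_1,\dots,b_n)\in\mathcal{C}$ solving the system (S) such that $$m(x)=\frac{c_j}{\left(a_0+\sum_{k=1}^{n}a_k\cos(2\pi kx)+b_k\sin(2\pi kx)-V(x)\right)^{1/\alpha}},\qquad \overline{H}=a_0-p_0.\tag{$*$}$$ Conversely, if $(a_0,\dots,a_n,b_1,\dots,b_n)\in\mathcal{C}$ solves (S), then $(m,\overline{H})$ defined by $( * )$ solves problem (P).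
   Context: $\mathbb{T}=\mathbb{R}/\mathbb{Z}$. Problem (P): find $(m,\overline{H})\in C(\mathbb{T})\times\mathbb{R}$ with $m>0$, $\int_{\mathbb{T}}m=1$, and $\frac{j^2}{2m(x)^\alpha}+V(x)=\int_{\mathbb{T}}G(x-y)m(y)\,dy+\overline{H}$ for all $x$. Set $c_j=(j^2/2)^{1/\alpha}$; $\phi_\alpha(t)=\frac{c_j\alpha}{\alpha-1}t^{(\alpha-1)/\alpha}$ if $\alpha\ne1$, $\phi_\alpha(t)=c_j\ln t$ if $\alpha=1$ ($t>0$). $\mathcal{C}\subset\mathbb{R}^{2n+1}$ is the set of $(a_0,\dots,a_n,b_1,\dots,b_n)$ with $a_0+\sum_{k=1}^n(a_k\cos(2\pi kx)+b_k\sin(2\pi kx))-V(x)>0$ for all $x\in\mathbb{T}$; on $\mathcal{C}$, $\Phi_\alpha(a_0,\dots,b_n)=\int_{\mathbb{T}}\phi_\alpha\big(a_0+\sum_{k=1}^n(a_k\cos(2\pi ky)+b_k\sin(2\pi ky))-V(y)\big)\,dy$. System (S): $\partial\Phi_\alpha/\partial a_0=1$, $\partial\Phi_\alpha/\partial a_k=\frac{p_ka_k+q_kb_k}{p_k^2+q_k^2}$, $\partial\Phi_\alpha/\partial b_k=\frac{p_kb_k-q_ka_k}{p_k^2+q_k^2}$ for $1\le k\le n$. *)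

theory Defs
  imports "HOL-Analysis.Analysis"
begin

text \<open>Functions on the torus T = R/Z are represented as 1-periodic functions on the reals;
  integrals over T are integrals over [0,1].\<close>

definition periodic1 :: "(real \<Rightarrow> real) \<Rightarrow> bool" where
  "periodic1 f \<longleftrightarrow> (\<forall>x. f (x + 1) = f x)"

definition contT :: "(real \<Rightarrow> real) \<Rightarrow> bool" where
  "contT f \<longleftrightarrow> continuous_on UNIV f \<and> periodic1 f"

definition C2T :: "(real \<Rightarrow> real) \<Rightarrow> bool" where
  "C2T f \<longleftrightarrow> periodic1 f \<and>
     (\<exists>f' f''. (\<forall>x. (f has_real_derivative f' x) (at x)) \<and>
               (\<forall>x. (f' has_real_derivative f'' x) (at x)) \<and> continuous_on UNIV f'')"

definition trig :: "nat \<Rightarrow> (nat \<Rightarrow> real) \<Rightarrow> (nat \<Rightarrow> real) \<Rightarrow> real \<Rightarrow> real" where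
  "trig n c d x = c 0 + (\<Sum>k=1..n. c k * cos (2 * pi * real k * x) + d k * sin (2 * pi * real k * x))"

definition cj :: "real \<Rightarrow> real \<Rightarrow> real" where
  "cj \<alpha> j = (j ^ 2 / 2) powr (1 / \<alpha>)"

definition phi :: "real \<Rightarrow> real \<Rightarrow> real \<Rightarrow> real" where
  "phi \<alpha> j t = (if \<alpha> = 1 then cj \<alpha> j * ln t
                 else cj \<alpha> j * \<alpha> / (\<alpha> - 1) * t powr ((\<alpha> - 1) / \<alpha>))"

definition solvesP :: "real \<Rightarrow> real \<Rightarrow> (real \<Rightarrow> real) \<Rightarrow> (real \<Rightarrow> real)
    \<Rightarrow> (real \<Rightarrow> real) \<Rightarrow> real \<Rightarrow> bool" where
  "solvesP \<alpha> j V G m H \<longleftrightarrow> contT m \<and> (\<forall>x. m x > 0) \<and> integral {0..1} m = 1 \<and>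
     (\<forall>x. j ^ 2 / (2 * m x powr \<alpha>) + V x = integral {0..1} (\<lambda>y. G (x - y) * m y) + H)"

definition inC :: "nat \<Rightarrow> (real \<Rightarrow> real) \<Rightarrow> (nat \<Rightarrow> real) \<Rightarrow> (nat \<Rightarrow> real) \<Rightarrow> bool" where
  "inC n V a b \<longleftrightarrow> (\<forall>x. trig n a b x - V x > 0)"

definition Phi :: "real \<Rightarrow> real \<Rightarrow> nat \<Rightarrow> (real \<Rightarrow> real) \<Rightarrow> (nat \<Rightarrow> real) \<Rightarrow> (nat \<Rightarrow> real) \<Rightarrow> real" where
  "Phi \<alpha> j n V a b = integral {0..1} (\<lambda>y. phi \<alpha> j (trig n a b y - V y))"

text \<open>System (S); partial derivatives as derivatives of the one-variable restrictions.\<close>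
definition solvesS :: "real \<Rightarrow> real \<Rightarrow> nat \<Rightarrow> (real \<Rightarrow> real) \<Rightarrow> (nat \<Rightarrow> real) \<Rightarrow> (nat \<Rightarrow> real)
    \<Rightarrow> (nat \<Rightarrow> real) \<Rightarrow> (nat \<Rightarrow> real) \<Rightarrow> bool" where
  "solvesS \<alpha> j n V p q a b \<longleftrightarrow>
     ((\<lambda>t. Phi \<alpha> j n V (a(0 := t)) b) has_real_derivative 1) (at (a 0)) \<and>
     (\<forall>k\<in>{1..n}.
        ((\<lambda>t. Phi \<alpha> j n V (a(k := t)) b) has_real_derivative
           (p k * a k + q k * b k) / (p k ^ 2 + q k ^ 2)) (at (a k)) \<and>
        ((\<lambda>t. Phi \<alpha> j n V a (b(k := t))) has_real_derivative
           (p k * b k - q k * a k) / (p k ^ 2 + q k ^ 2)) (at (b k)))"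

end

theory Submission
  imports Defs
begin

text \<open>Since G is a trigonometric polynomial, so is the convolution G * m: with
  C_k, S_k the Fourier coefficients of m, its k-th coefficients are
  (p_k C_k - q_k S_k, p_k S_k + q_k C_k), i.e. C_k + i S_k multiplied by p_k + i q_k, which is
  invertible because p_k^2 + q_k^2 > 0. Thus (P) says that u = j^2/(2 m^alpha) is a
  trigonometric polynomial minus V, equivalently m = c_j u^(-1/alpha) = phi_alpha'(u).
  Differentiating Phi_alpha under the integral sign shows that its partial derivatives are
  the mass and the Fourier coefficients of phi_alpha'(u), so (S) says exactly that this density has
  mass 1 and that its coefficients and those of u are related by the inverse multiplication.\<close>

lemma positive_perturbation_ball:
  fixes u g :: "real \<Rightarrow> real"
  assumes "compact S" "continuous_on S u" "continuous_on S g" "\<And>y. y \<in> S \<Longrightarrow> 0 < u y"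
  obtains r where "0 < r" "\<And>t y. t \<in> ball t0 r \<Longrightarrow> y \<in> S \<Longrightarrow> 0 < u y + (t - t0) * g y"
proof (cases "S = {}")
  case True
  then show ?thesis using that[of 1] by simp
next
  case False
  obtain y0 where "y0 \<in> S" and y0: "\<And>y. y \<in> S \<Longrightarrow> u y0 \<le> u y"
    using continuous_attains_inf[OF assms(1) False assms(2)] by blast
  define \<delta> where "\<delta> = u y0"
  have "\<delta> > 0" using \<open>y0 \<in> S\<close> assms(4) by (simp add: \<delta>_def)
  have "bounded (g ` S)"
    using compact_continuous_image[OF assms(3,1)] by (rule compact_imp_bounded)
  then obtain M where M: "\<And>y. y \<in> S \<Longrightarrow> \<bar>g y\<bar> \<le> M"
    by (auto simp: bounded_real)
  have "M \<ge> 0" using M[OF \<open>y0 \<in> S\<close>] by linarith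
  define r where "r = \<delta> / (M + 1)"
  have "r > 0" using \<open>\<delta> > 0\<close> \<open>M \<ge> 0\<close> by (simp add: r_def)
  show ?thesis
  proof (rule that[OF \<open>r > 0\<close>])
    fix t y assume t: "t \<in> ball t0 r" and y: "y \<in> S"
    have "\<bar>(t - t0) * g y\<bar> \<le> r * M"
      unfolding abs_mult
      using t M[OF y] by (intro mult_mono) (auto simp: dist_real_def)
    also have "\<dots> < \<delta>"
      using \<open>\<delta> > 0\<close> \<open>M \<ge> 0\<close> by (simp add: r_def field_simps)
    finally show "0 < u y + (t - t0) * g y"
      using y0[OF y] unfolding \<delta>_def by linarith
  qed
qed

lemma integral_shift_has_real_derivative:
  fixes f f' u g :: "real \<Rightarrow> real"
  assumes f': "\<And>s. 0 < s \<Longrightarrow> (f has_real_derivative f' s) (at s)"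
    and cont_f': "continuous_on {0<..} f'"
    and cu: "continuous_on {a..b} u" and cg: "continuous_on {a..b} g"
    and pos: "\<And>y. y \<in> {a..b} \<Longrightarrow> 0 < u y"
  shows "((\<lambda>t. integral {a..b} (\<lambda>y. f (u y + (t - t0) * g y))) has_real_derivative
           integral {a..b} (\<lambda>y. f' (u y) * g y)) (at t0)"
proof -
  obtain r where "0 < r"
    and shift_pos: "\<And>t y. t \<in> ball t0 r \<Longrightarrow> y \<in> {a..b} \<Longrightarrow> 0 < u y + (t - t0) * g y"
    using positive_perturbation_ball[OF compact_Icc cu cg pos] by blast
  have cont_f: "continuous_on {0<..} f"
    using f' by (meson DERIV_isCont continuous_at_imp_continuous_on greaterThan_iff)
  have "((\<lambda>t. integral (cbox a b) (\<lambda>y. f (u y + (t - t0) * g y))) has_field_derivative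
      integral (cbox a b) (\<lambda>y. f' (u y + (t0 - t0) * g y) * g y)) (at t0 within ball t0 r)"
  \<comment> \<open>\<open>fx\<close> must be given: unification would otherwise produce a derivative that ignores \<open>t\<close>\<close>
  proof (rule leibniz_rule_field_derivative[where fx = "\<lambda>t y. f' (u y + (t - t0) * g y) * g y"])
    fix t y assume "t \<in> ball t0 r" "y \<in> cbox a b"
    then have "0 < u y + (t - t0) * g y"
      using shift_pos by simp
    moreover have "((\<lambda>t. u y + (t - t0) * g y) has_real_derivative g y) (at t)"
      by (auto intro!: derivative_eq_intros)
    ultimately have "((\<lambda>t. f (u y + (t - t0) * g y)) has_real_derivative
        f' (u y + (t - t0) * g y) * g y) (at t)"
      by (rule DERIV_chain2[OF f'])
    then show "((\<lambda>t. f (u y + (t - t0) * g y)) has_field_derivative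
        f' (u y + (t - t0) * g y) * g y) (at t within ball t0 r)"
      by (rule has_field_derivative_at_within)
  next
    fix t assume "t \<in> ball t0 r"
    then have "continuous_on {a..b} (\<lambda>y. f (u y + (t - t0) * g y))"
      using shift_pos
      by (intro continuous_on_compose2[OF cont_f] continuous_intros cu cg) auto
    then show "(\<lambda>y. f (u y + (t - t0) * g y)) integrable_on cbox a b"
      by (simp add: integrable_continuous_real)
  next
    have "continuous_on (ball t0 r \<times> {a..b})
        (\<lambda>z. f' (u (snd z) + (fst z - t0) * g (snd z)) * g (snd z))"
      using shift_pos
      by (intro continuous_intros continuous_on_compose2[OF cont_f']
          continuous_on_compose2[OF cu] continuous_on_compose2[OF cg]) auto
    then show "continuous_on (ball t0 r \<times> cbox a b) (\<lambda>(t, y). f' (u y + (t - t0) * g y) * g y)"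
      by (simp add: case_prod_beta)
  qed (use \<open>0 < r\<close> in auto)
  moreover have "at t0 within ball t0 r = at t0"
    using \<open>0 < r\<close> by (intro at_within_open) auto
  ultimately show ?thesis by simp
qed

lemma phi_has_real_derivative:
  assumes "0 < \<alpha>" "0 < s"
  shows "(phi \<alpha> j has_real_derivative cj \<alpha> j / s powr (1 / \<alpha>)) (at s)"
proof (cases "\<alpha> = 1")
  case True
  then show ?thesis
    using assms unfolding phi_def[abs_def]
    by (auto intro!: derivative_eq_intros simp: powr_neg_one)
next
  case False
  have "(\<alpha> - 1) / \<alpha> - 1 = - (1 / \<alpha>)"
    using assms by (simp add: field_simps)
  then have "s powr ((\<alpha> - 1) / \<alpha> - 1) = 1 / s powr (1 / \<alpha>)"
    by (simp add: powr_minus_divide)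
  then have "cj \<alpha> j * \<alpha> / (\<alpha> - 1) * ((\<alpha> - 1) / \<alpha> * s powr ((\<alpha> - 1) / \<alpha> - 1))
      = cj \<alpha> j / s powr (1 / \<alpha>)"
    using False assms by simp
  moreover have "((\<lambda>t. cj \<alpha> j * \<alpha> / (\<alpha> - 1) * t powr ((\<alpha> - 1) / \<alpha>)) has_real_derivative
      cj \<alpha> j * \<alpha> / (\<alpha> - 1) * ((\<alpha> - 1) / \<alpha> * s powr ((\<alpha> - 1) / \<alpha> - 1))) (at s)"
    using assms by (auto intro!: derivative_eq_intros)
  ultimately show ?thesis
    using False by (simp add: phi_def[abs_def])
qed

lemma continuous_on_trig: "continuous_on S (trig n a b)"
  unfolding trig_def[abs_def] by (intro continuous_intros)

lemma periodic1_trig: "periodic1 (trig n a b)"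
proof -
  have shift: "2 * pi * real k * (x + 1) = 2 * pi * real k * x + 2 * real k * pi" for k x
    by (simp add: algebra_simps)
  have "cos (2 * pi * real k * (x + 1)) = cos (2 * pi * real k * x)"
    "sin (2 * pi * real k * (x + 1)) = sin (2 * pi * real k * x)" for k x
    unfolding shift cos_add sin_add by simp_all
  then show ?thesis
    by (simp add: periodic1_def trig_def)
qed

lemma sum_fun_upd_diff:
  fixes c :: "nat \<Rightarrow> real"
  assumes "k \<in> A" "finite A"
  shows "(\<Sum>i\<in>A. (f(k := t)) i * c i) = (\<Sum>i\<in>A. f i * c i) + (t - f k) * c k"
proof -
  have "(\<Sum>i\<in>A. (f(k := t)) i * c i) - (\<Sum>i\<in>A. f i * c i)
      = (\<Sum>i\<in>A. if i = k then (t - f k) * c k else 0)"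
    unfolding sum_subtractf[symmetric] by (rule sum.cong) (auto simp: left_diff_distrib)
  then show ?thesis
    using assms by simp
qed

lemma trig_fun_upd_cos:
  assumes "k \<le> n"
  shows "trig n (a(k := t)) b x = trig n a b x + (t - a k) * cos (2 * pi * real k * x)"
proof (cases "k = 0")
  case True
  then show ?thesis by (simp add: trig_def)
next
  case False
  then show ?thesis
    using assms sum_fun_upd_diff[of k "{1..n}" a t "\<lambda>i. cos (2 * pi * real i * x)"]
    by (simp add: trig_def sum.distrib)
qed

lemma trig_fun_upd_sin:
  assumes "k \<in> {1..n}"
  shows "trig n a (b(k := t)) x = trig n a b x + (t - b k) * sin (2 * pi * real k * x)"
  using assms sum_fun_upd_diff[of k "{1..n}" b t "\<lambda>i. sin (2 * pi * real i * x)"]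
  by (simp add: trig_def sum.distrib)

lemma trig_eq_shift:
  assumes "\<And>k. k \<in> {1..n} \<Longrightarrow> a k = a' k \<and> b k = b' k"
  shows "trig n a b x = trig n a' b' x + (a 0 - a' 0)"
proof -
  have "(\<Sum>k=1..n. a k * cos (2 * pi * real k * x) + b k * sin (2 * pi * real k * x))
      = (\<Sum>k=1..n. a' k * cos (2 * pi * real k * x) + b' k * sin (2 * pi * real k * x))"
    using assms by (intro sum.cong) auto
  then show ?thesis
    by (simp add: trig_def)
qed

definition fourier_cos :: "(real \<Rightarrow> real) \<Rightarrow> nat \<Rightarrow> real" where
  "fourier_cos m k = integral {0..1} (\<lambda>y. cos (2 * pi * real k * y) * m y)"

definition fourier_sin :: "(real \<Rightarrow> real) \<Rightarrow> nat \<Rightarrow> real" where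
  "fourier_sin m k = integral {0..1} (\<lambda>y. sin (2 * pi * real k * y) * m y)"

lemma fourier_cos_0 [simp]: "fourier_cos m 0 = integral {0..1} m"
  by (simp add: fourier_cos_def)

lemma fourier_sin_0 [simp]: "fourier_sin m 0 = 0"
  by (simp add: fourier_sin_def)

lemma trig_diff_expand:
  "(p * cos (2 * pi * real k * (x - y)) + q * sin (2 * pi * real k * (x - y))) * m
    = (p * (cos (2 * pi * real k * y) * m) - q * (sin (2 * pi * real k * y) * m))
        * cos (2 * pi * real k * x)
      + (p * (sin (2 * pi * real k * y) * m) + q * (cos (2 * pi * real k * y) * m))
        * sin (2 * pi * real k * x)"
proof -
  have "2 * pi * real k * (x - y) = 2 * pi * real k * x - 2 * pi * real k * y"
    by (simp add: right_diff_distrib)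
  then show ?thesis
    by (simp only: cos_diff sin_diff) (simp add: algebra_simps)
qed

lemma integral_trig_convolution:
  assumes cm: "continuous_on {0..1} m"
  shows "integral {0..1} (\<lambda>y. trig n p q (x - y) * m y) =
    trig n (\<lambda>k. p k * fourier_cos m k - q k * fourier_sin m k)
           (\<lambda>k. p k * fourier_sin m k + q k * fourier_cos m k) x"
proof -
  let ?c = "\<lambda>k y. cos (2 * pi * real k * y)" and ?s = "\<lambda>k y. sin (2 * pi * real k * y)"
  have has_int: "((\<lambda>y. h y * m y) has_integral integral {0..1} (\<lambda>y. h y * m y)) {0..1}"
    if "continuous_on {0..1} h" for h
    using that cm by (intro integrable_integral integrable_continuous_interval continuous_on_mult)
  have "trig n p q (x - y) * m y = p 0 * (?c 0 y * m y) +
    (\<Sum>k=1..n. (p k * (?c k y * m y) - q k * (?s k y * m y)) * ?c k x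
             + (p k * (?s k y * m y) + q k * (?c k y * m y)) * ?s k x)" for y
    unfolding trig_def by (subst distrib_right) (simp add: sum_distrib_right trig_diff_expand)
  moreover have "((\<lambda>y. p 0 * (?c 0 y * m y) +
    (\<Sum>k=1..n. (p k * (?c k y * m y) - q k * (?s k y * m y)) * ?c k x
             + (p k * (?s k y * m y) + q k * (?c k y * m y)) * ?s k x)) has_integral
    p 0 * fourier_cos m 0 +
    (\<Sum>k=1..n. (p k * fourier_cos m k - q k * fourier_sin m k) * ?c k x
             + (p k * fourier_sin m k + q k * fourier_cos m k) * ?s k x)) {0..1}"
    unfolding fourier_cos_def fourier_sin_def
    by (intro has_integral_add has_integral_mult_left has_integral_mult_right has_integral_diff
        has_integral_sum finite_atLeastAtMost has_int continuous_intros)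
  ultimately show ?thesis
    unfolding trig_def by (simp add: integral_unique)
qed

text \<open>Multiplication of \<open>c + i s\<close> by \<open>p + i q\<close> and its inverse.\<close>

lemma rotation_inverse_iff:
  fixes p q a b c s :: real
  assumes "p\<^sup>2 + q\<^sup>2 \<noteq> 0"
  shows "a = p * c - q * s \<and> b = p * s + q * c \<longleftrightarrow>
    c = (p * a + q * b) / (p\<^sup>2 + q\<^sup>2) \<and> s = (p * b - q * a) / (p\<^sup>2 + q\<^sup>2)"
proof -
  define N where "N = p\<^sup>2 + q\<^sup>2"
  have "N \<noteq> 0" using assms by (simp add: N_def)
  have fwd: "p * (p * c - q * s) + q * (p * s + q * c) = N * c"
    "p * (p * s + q * c) - q * (p * c - q * s) = N * s"
    and bwd: "p * (p * a + q * b) - q * (p * b - q * a) = N * a"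
    "p * (p * b - q * a) + q * (p * a + q * b) = N * b"
    by (simp_all add: N_def algebra_simps power2_eq_square)
  have "a = p * c - q * s \<and> b = p * s + q * c \<longleftrightarrow>
      c = (p * a + q * b) / N \<and> s = (p * b - q * a) / N"
  proof
    assume "a = p * c - q * s \<and> b = p * s + q * c"
    then show "c = (p * a + q * b) / N \<and> s = (p * b - q * a) / N"
      using fwd \<open>N \<noteq> 0\<close> by auto
  next
    assume "c = (p * a + q * b) / N \<and> s = (p * b - q * a) / N"
    moreover have "p * ((p * a + q * b) / N) - q * ((p * b - q * a) / N)
        = (p * (p * a + q * b) - q * (p * b - q * a)) / N"
      by (simp only: times_divide_eq_right diff_divide_distrib[symmetric])
    moreover have "p * ((p * b - q * a) / N) + q * ((p * a + q * b) / N)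
        = (p * (p * b - q * a) + q * (p * a + q * b)) / N"
      by (simp only: times_divide_eq_right add_divide_distrib[symmetric])
    ultimately show "a = p * c - q * s \<and> b = p * s + q * c"
      using bwd \<open>N \<noteq> 0\<close> by auto
  qed
  then show ?thesis by (simp add: N_def)
qed

lemma cj_pos: "j \<noteq> 0 \<Longrightarrow> 0 < cj \<alpha> j"
  by (simp add: cj_def)

lemma cj_div_powr_eq_iff:
  assumes "0 < \<alpha>" "j \<noteq> 0" "0 < m" "0 < u"
  shows "m = cj \<alpha> j / u powr (1 / \<alpha>) \<longleftrightarrow> u = j\<^sup>2 / (2 * m powr \<alpha>)"
proof -
  define X where "X = (j\<^sup>2 / 2) / u"
  have "0 < X" using assms by (simp add: X_def)
  have "X powr (1 / \<alpha>) = (j\<^sup>2 / 2) powr (1 / \<alpha>) / u powr (1 / \<alpha>)"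
    unfolding X_def by (rule powr_divide)
  then have "cj \<alpha> j / u powr (1 / \<alpha>) = X powr (1 / \<alpha>)"
    by (simp add: cj_def)
  moreover have "m = X powr (1 / \<alpha>) \<longleftrightarrow> m powr \<alpha> = X"
    using assms \<open>0 < X\<close> by (auto simp: powr_powr)
  moreover have "m powr \<alpha> = X \<longleftrightarrow> u = j\<^sup>2 / (2 * m powr \<alpha>)"
    using assms by (auto simp: X_def field_simps)
  ultimately show ?thesis by simp
qed

definition coeff_density :: "real \<Rightarrow> real \<Rightarrow> nat \<Rightarrow> (real \<Rightarrow> real)
    \<Rightarrow> (nat \<Rightarrow> real) \<Rightarrow> (nat \<Rightarrow> real) \<Rightarrow> real \<Rightarrow> real" where
  "coeff_density \<alpha> j n V a b x = cj \<alpha> j / (trig n a b x - V x) powr (1 / \<alpha>)"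

lemma inC_pos: "inC n V a b \<Longrightarrow> 0 < trig n a b x - V x"
  by (simp add: inC_def)

lemma coeff_density_pos:
  assumes "j \<noteq> 0" "inC n V a b"
  shows "0 < coeff_density \<alpha> j n V a b x"
proof -
  have "trig n a b x - V x \<noteq> 0"
    using inC_pos[OF assms(2), of x] by linarith
  then show ?thesis
    using cj_pos[OF assms(1)] by (simp add: coeff_density_def)
qed

lemma contT_coeff_density:
  assumes "continuous_on UNIV V" "periodic1 V" "inC n V a b"
  shows "contT (coeff_density \<alpha> j n V a b)"
proof -
  have "trig n a b x - V x \<noteq> 0" for x
    using inC_pos[OF assms(3), of x] by linarith
  then have "continuous_on UNIV (coeff_density \<alpha> j n V a b)"
    unfolding coeff_density_def[abs_def]
    by (intro continuous_intros continuous_on_trig assms(1)) auto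
  moreover have "periodic1 (coeff_density \<alpha> j n V a b)"
    using assms(2) periodic1_trig by (simp add: periodic1_def coeff_density_def)
  ultimately show ?thesis
    by (simp add: contT_def)
qed

lemma Phi_has_derivative_cos_coeff:
  assumes "0 < \<alpha>" "continuous_on UNIV V" "inC n V a b" "k \<le> n"
  shows "((\<lambda>t. Phi \<alpha> j n V (a(k := t)) b) has_real_derivative
           fourier_cos (coeff_density \<alpha> j n V a b) k) (at (a k))"
proof -
  let ?g = "\<lambda>y. cos (2 * pi * real k * y)"
  have "(\<lambda>t. Phi \<alpha> j n V (a(k := t)) b)
      = (\<lambda>t. integral {0..1} (\<lambda>y. phi \<alpha> j ((trig n a b y - V y) + (t - a k) * ?g y)))"
    using assms(4) by (simp add: fun_eq_iff Phi_def trig_fun_upd_cos algebra_simps)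
  moreover have "((\<lambda>t. integral {0..1} (\<lambda>y. phi \<alpha> j ((trig n a b y - V y) + (t - a k) * ?g y)))
      has_real_derivative integral {0..1} (\<lambda>y. cj \<alpha> j / (trig n a b y - V y) powr (1 / \<alpha>) * ?g y))
      (at (a k))"
    using assms(1,3)
    by (intro integral_shift_has_real_derivative phi_has_real_derivative continuous_intros
        continuous_on_trig continuous_on_subset[OF assms(2)]) (auto simp: inC_def)
  ultimately show ?thesis
    by (simp add: fourier_cos_def coeff_density_def mult.commute)
qed

lemma Phi_has_derivative_sin_coeff:
  assumes "0 < \<alpha>" "continuous_on UNIV V" "inC n V a b" "k \<in> {1..n}"
  shows "((\<lambda>t. Phi \<alpha> j n V a (b(k := t))) has_real_derivative
           fourier_sin (coeff_density \<alpha> j n V a b) k) (at (b k))"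
proof -
  let ?g = "\<lambda>y. sin (2 * pi * real k * y)"
  have "(\<lambda>t. Phi \<alpha> j n V a (b(k := t)))
      = (\<lambda>t. integral {0..1} (\<lambda>y. phi \<alpha> j ((trig n a b y - V y) + (t - b k) * ?g y)))"
    using assms(4) by (simp add: fun_eq_iff Phi_def trig_fun_upd_sin algebra_simps)
  moreover have "((\<lambda>t. integral {0..1} (\<lambda>y. phi \<alpha> j ((trig n a b y - V y) + (t - b k) * ?g y)))
      has_real_derivative integral {0..1} (\<lambda>y. cj \<alpha> j / (trig n a b y - V y) powr (1 / \<alpha>) * ?g y))
      (at (b k))"
    using assms(1,3)
    by (intro integral_shift_has_real_derivative phi_has_real_derivative continuous_intros
        continuous_on_trig continuous_on_subset[OF assms(2)]) (auto simp: inC_def)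
  ultimately show ?thesis
    by (simp add: fourier_sin_def coeff_density_def mult.commute)
qed

lemma solvesS_iff_fourier_coeffs:
  fixes \<alpha> j :: real
  assumes "0 < \<alpha>" "continuous_on UNIV V" "inC n V a b"
  defines "m \<equiv> coeff_density \<alpha> j n V a b"
  shows "solvesS \<alpha> j n V p q a b \<longleftrightarrow> integral {0..1} m = 1 \<and>
    (\<forall>k\<in>{1..n}. fourier_cos m k = (p k * a k + q k * b k) / (p k ^ 2 + q k ^ 2) \<and>
                fourier_sin m k = (p k * b k - q k * a k) / (p k ^ 2 + q k ^ 2))"
proof -
  have unique: "(F has_real_derivative E) (at x) \<longleftrightarrow> D = E"
    if "(F has_real_derivative D) (at x)" for F D E x
    using that DERIV_unique by blast
  note cos_coeff = unique[OF Phi_has_derivative_cos_coeff[OF assms(1-3)]]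
    and sin_coeff = unique[OF Phi_has_derivative_sin_coeff[OF assms(1-3)]]
  show ?thesis
    unfolding solvesS_def m_def cos_coeff[of 0, simplified]
    using cos_coeff sin_coeff by auto
qed

lemma solvesP_imp_solvesS:
  assumes "0 < \<alpha>" "j \<noteq> 0" "continuous_on UNIV V"
    and N: "\<forall>k\<in>{1..n}. p k ^ 2 + q k ^ 2 > 0"
    and P: "solvesP \<alpha> j V (trig n p q) m H"
  obtains a b where "inC n V a b" "solvesS \<alpha> j n V p q a b"
    "m = coeff_density \<alpha> j n V a b" "H = a 0 - p 0"
proof -
  have cm: "continuous_on {0..1} m" and m_pos: "\<And>x. 0 < m x" and m1: "integral {0..1} m = 1"
    and eq: "\<And>x. j\<^sup>2 / (2 * m x powr \<alpha>) + V x = integral {0..1} (\<lambda>y. trig n p q (x - y) * m y) + H"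
    using P by (auto simp: solvesP_def contT_def intro: continuous_on_subset)
  define A where "A = (\<lambda>k. p k * fourier_cos m k - q k * fourier_sin m k)"
  define b where "b = (\<lambda>k. p k * fourier_sin m k + q k * fourier_cos m k)"
  define a where "a = A(0 := p 0 + H)"
  have "integral {0..1} (\<lambda>y. trig n p q (x - y) * m y) = trig n A b x" for x
    unfolding A_def b_def by (rule integral_trig_convolution[OF cm])
  moreover have "trig n a b x = trig n A b x + H" for x
    using trig_eq_shift[of n a A b b x] m1 by (simp add: a_def A_def)
  ultimately have "trig n a b x = integral {0..1} (\<lambda>y. trig n p q (x - y) * m y) + H" for x
    by simp
  then have u: "trig n a b x - V x = j\<^sup>2 / (2 * m x powr \<alpha>)" for x
    using eq[of x] by simp
  have "0 < j\<^sup>2 / (2 * m x powr \<alpha>)" for x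
    using \<open>j \<noteq> 0\<close> m_pos[of x] by simp
  then have inC: "inC n V a b"
    by (simp add: inC_def u)
  have m_eq: "m = coeff_density \<alpha> j n V a b"
    using cj_div_powr_eq_iff[OF assms(1,2) m_pos inC_pos[OF inC]] u
    by (simp add: fun_eq_iff coeff_density_def)
  have "\<forall>k\<in>{1..n}. fourier_cos m k = (p k * a k + q k * b k) / (p k ^ 2 + q k ^ 2) \<and>
      fourier_sin m k = (p k * b k - q k * a k) / (p k ^ 2 + q k ^ 2)"
  proof
    fix k :: nat assume k: "k \<in> {1..n}"
    then have "p k ^ 2 + q k ^ 2 \<noteq> 0"
      using N by force
    from rotation_inverse_iff[OF this, of "a k" "fourier_cos m k" "fourier_sin m k" "b k"]
    show "fourier_cos m k = (p k * a k + q k * b k) / (p k ^ 2 + q k ^ 2) \<and>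
        fourier_sin m k = (p k * b k - q k * a k) / (p k ^ 2 + q k ^ 2)"
      using k by (simp add: a_def A_def b_def)
  qed
  then have "solvesS \<alpha> j n V p q a b"
    using m1 by (simp add: solvesS_iff_fourier_coeffs[OF assms(1,3) inC] m_eq[symmetric])
  then show ?thesis
    using that inC m_eq by (simp add: a_def)
qed

lemma solvesS_imp_solvesP:
  assumes "0 < \<alpha>" "j \<noteq> 0" "continuous_on UNIV V" "periodic1 V"
    and N: "\<forall>k\<in>{1..n}. p k ^ 2 + q k ^ 2 > 0"
    and inC: "inC n V a b" and S: "solvesS \<alpha> j n V p q a b"
  shows "solvesP \<alpha> j V (trig n p q) (coeff_density \<alpha> j n V a b) (a 0 - p 0)"
proof -
  define m where "m = coeff_density \<alpha> j n V a b"
  have m1: "integral {0..1} m = 1"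
    and coeffs: "\<And>k. k \<in> {1..n} \<Longrightarrow>
      fourier_cos m k = (p k * a k + q k * b k) / (p k ^ 2 + q k ^ 2) \<and>
      fourier_sin m k = (p k * b k - q k * a k) / (p k ^ 2 + q k ^ 2)"
    using S unfolding solvesS_iff_fourier_coeffs[OF assms(1,3) inC] m_def by auto
  have contT: "contT m" and m_pos: "\<And>x. 0 < m x"
    unfolding m_def using contT_coeff_density[OF assms(3,4) inC] coeff_density_pos[OF assms(2) inC]
    by auto
  define A where "A = (\<lambda>k. p k * fourier_cos m k - q k * fourier_sin m k)"
  define B where "B = (\<lambda>k. p k * fourier_sin m k + q k * fourier_cos m k)"
  have "a k = A k \<and> b k = B k" if "k \<in> {1..n}" for k
  proof -
    have "p k ^ 2 + q k ^ 2 \<noteq> 0"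
      using N that by force
    from rotation_inverse_iff[OF this, of "a k" "fourier_cos m k" "fourier_sin m k" "b k"]
    show ?thesis
      using coeffs[OF that] by (simp add: A_def B_def)
  qed
  then have "trig n a b x = trig n A B x + (a 0 - p 0)" for x
    using trig_eq_shift[of n a A b B x] m1 by (simp add: A_def)
  moreover have "integral {0..1} (\<lambda>y. trig n p q (x - y) * m y) = trig n A B x" for x
    unfolding A_def B_def using contT
    by (intro integral_trig_convolution) (auto simp: contT_def intro: continuous_on_subset)
  ultimately have "integral {0..1} (\<lambda>y. trig n p q (x - y) * m y) = trig n a b x - (a 0 - p 0)" for x
    by simp
  moreover have "j\<^sup>2 / (2 * m x powr \<alpha>) = trig n a b x - V x" for x
    using cj_div_powr_eq_iff[OF assms(1,2) m_pos[of x] inC_pos[OF inC, of x]]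
    by (simp add: m_def coeff_density_def)
  ultimately have "j\<^sup>2 / (2 * m x powr \<alpha>) + V x
      = integral {0..1} (\<lambda>y. trig n p q (x - y) * m y) + (a 0 - p 0)" for x
    by simp
  then show ?thesis
    unfolding solvesP_def m_def[symmetric] using contT m_pos m1 by blast
qed

lemma C2T_imp_continuous:
  assumes "C2T V"
  shows "continuous_on UNIV V"
proof -
  obtain V' where "\<And>x. (V has_real_derivative V' x) (at x)"
    using assms by (auto simp: C2T_def)
  then show ?thesis
    by (blast intro: continuous_at_imp_continuous_on DERIV_isCont)
qed

theorem proposition4p1:
  fixes \<alpha> j :: real and n :: nat and V :: "real \<Rightarrow> real" and p q :: "nat \<Rightarrow> real"
  assumes "0 < \<alpha>" and "\<alpha> \<le> 2" and "j \<noteq> 0" and "C2T V"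
    and "\<forall>k\<in>{1..n}. p k ^ 2 + q k ^ 2 > 0"
  shows "(\<forall>m H. solvesP \<alpha> j V (trig n p q) m H \<longrightarrow>
            (\<exists>a b. inC n V a b \<and> solvesS \<alpha> j n V p q a b \<and>
               (\<forall>x. m x = cj \<alpha> j / (trig n a b x - V x) powr (1 / \<alpha>)) \<and>
               H = a 0 - p 0)) \<and>
         (\<forall>a b. inC n V a b \<and> solvesS \<alpha> j n V p q a b \<longrightarrow>
            solvesP \<alpha> j V (trig n p q)
              (\<lambda>x. cj \<alpha> j / (trig n a b x - V x) powr (1 / \<alpha>)) (a 0 - p 0))"
proof -
  have V: "continuous_on UNIV V" "periodic1 V"
    using C2T_imp_continuous[OF assms(4)] assms(4) by (simp_all add: C2T_def)
  have "\<exists>a b. inC n V a b \<and> solvesS \<alpha> j n V p q a b \<and>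
      (\<forall>x. m x = cj \<alpha> j / (trig n a b x - V x) powr (1 / \<alpha>)) \<and> H = a 0 - p 0"
    if P: "solvesP \<alpha> j V (trig n p q) m H" for m H
  proof -
    obtain a b where "inC n V a b" "solvesS \<alpha> j n V p q a b"
        "m = coeff_density \<alpha> j n V a b" "H = a 0 - p 0"
      by (rule solvesP_imp_solvesS[OF assms(1,3) V(1) assms(5) P])
    then show ?thesis
      by (intro exI[of _ a] exI[of _ b]) (simp add: coeff_density_def)
  qed
  moreover have "solvesP \<alpha> j V (trig n p q)
      (\<lambda>x. cj \<alpha> j / (trig n a b x - V x) powr (1 / \<alpha>)) (a 0 - p 0)"
    if "inC n V a b" "solvesS \<alpha> j n V p q a b" for a b
    using solvesS_imp_solvesP[OF assms(1,3) V assms(5) that]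
    by (simp add: coeff_density_def[abs_def])
  ultimately show ?thesis
    by blast
qed

end
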